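(* For every integer $n\ge1$, $$\int_2^\infty F_n(w)\,dw\le n.$$
   Context: For $w>0$ and integer $n\ge1$ let $a_n(w)=\sum_{j=0}^n w^j$, $b_n(w)=\sum_{j=1}^n jw^j$, $c_n(w)=\sum_{j=0}^n j^2w^j$, and $$F_n(w)=\frac{1}{2\sqrt{w}}\sqrt{\frac{c_n(w)}{a_n(w)}}\sqrt{\frac{a_n(w)c_n(w)-b_n(w)^2}{w\,a_n(w)^2}}.$$ *)

theory Defs
  imports "HOL-Analysis.Analysis"
begin

definition a_n :: "nat \<Rightarrow> real \<Rightarrow> real" where
  "a_n n w = (\<Sum>j=0..n. w ^ j)"

definition b_n :: "nat \<Rightarrow> real \<Rightarrow> real" where
  "b_n n w = (\<Sum>j=1..n. real j * w ^ j)"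

definition c_n :: "nat \<Rightarrow> real \<Rightarrow> real" where
  "c_n n w = (\<Sum>j=0..n. (real j)^2 * w ^ j)"

definition F_n :: "nat \<Rightarrow> real \<Rightarrow> real" where
  "F_n n w = 1 / (2 * sqrt w) * sqrt (c_n n w / a_n n w)
     * sqrt ((a_n n w * c_n n w - (b_n n w)^2) / (w * (a_n n w)^2))"

end

theory Submission
  imports Defs "HOL-Real_Asymp.Real_Asymp"
begin

text \<open>Write \<open>A, B, C\<close> for \<open>a_n n w, b_n n w, c_n n w\<close>, so that
  \<open>F_n n w = sqrt (C (A C - B\<^sup>2) / (4 w\<^sup>2 A\<^sup>3))\<close>. Termwise \<open>C \<le> n\<^sup>2 A\<close>, and
  \<open>A C - B\<^sup>2 \<le> A D\<close> with \<open>D = n\<^sup>2 A - 2 n B + C = \<Sum>j. w\<^sup>j (n - j)\<^sup>2\<close>, since the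
  difference is \<open>(n A - B)\<^sup>2\<close>. The closed forms of the three geometric-type sums show
  \<open>(w - 1)\<^sup>3 D \<le> w\<^sup>2 A\<close> for \<open>w > 1\<close>, hence \<open>F_n n w \<le> n/2 \<cdot> (w - 1) powr (-3/2)\<close>,
  and the integral of this majorant over \<open>[2, \<infinity>)\<close> is exactly \<open>n\<close>.\<close>

lemma a_n_closed_form: "(w - 1) * a_n n w = w ^ (n + 1) - 1"
  unfolding a_n_def by (induction n) (auto simp: algebra_simps)

lemma b_n_closed_form:
  "(w - 1)\<^sup>2 * b_n n w = real n * w ^ (n + 2) - (real n + 1) * w ^ (n + 1) + w"
  unfolding b_n_def by (induction n) (auto simp: algebra_simps power2_eq_square)

lemma c_n_closed_form:
  "(w - 1) ^ 3 * c_n n w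
     = w ^ (n + 1) * ((real n)\<^sup>2 * w\<^sup>2 - (2 * (real n)\<^sup>2 + 2 * real n - 1) * w + (real n + 1)\<^sup>2)
       - w - w\<^sup>2"
  unfolding c_n_def by (induction n) (auto simp: algebra_simps power2_eq_square power3_eq_cube)

lemma b_n_eq_sum_from_0: "b_n n w = (\<Sum>j=0..n. real j * w ^ j)"
  unfolding b_n_def by (simp add: sum.atLeast_Suc_atMost)

lemma a_n_pos: "w \<ge> 0 \<Longrightarrow> a_n n w > 0"
  unfolding a_n_def by (intro sum_pos2[of _ 0]) auto

lemma c_n_le_a_n: "w \<ge> 0 \<Longrightarrow> c_n n w \<le> (real n)\<^sup>2 * a_n n w"
  unfolding c_n_def a_n_def sum_distrib_left by (intro sum_mono mult_right_mono) auto

lemma b_n_sq_le_a_n_mult_c_n: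
  assumes "w \<ge> 0"
  shows "(b_n n w)\<^sup>2 \<le> a_n n w * c_n n w"
proof -
  have sq: "(sqrt (w ^ j))\<^sup>2 = w ^ j" for j :: nat
    using assms by simp
  show ?thesis
    using Cauchy_Schwarz_ineq_sum[of "\<lambda>j. sqrt (w ^ j)" "\<lambda>j. sqrt (w ^ j) * real j" "{0..n}"]
    unfolding a_n_def b_n_eq_sum_from_0 c_n_def
    by (simp add: power_mult_distrib sq mult_ac flip: power2_eq_square)
qed

lemma moment_about_n_bound:
  fixes w :: real
  assumes w: "w > 1" and n: "n \<ge> 1"
  shows "(w - 1) ^ 3 * ((real n)\<^sup>2 * a_n n w - 2 * real n * b_n n w + c_n n w) \<le> w\<^sup>2 * a_n n w"
proof -
  define X where "X = w ^ (n + 1)"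
  define Q where "Q = (real n + 1)\<^sup>2 * w\<^sup>2 - (2 * (real n)\<^sup>2 + 2 * real n - 1) * w + (real n)\<^sup>2"
  have "(w - 1) ^ 3 * ((real n)\<^sup>2 * a_n n w - 2 * real n * b_n n w + c_n n w)
      = (real n)\<^sup>2 * (w - 1)\<^sup>2 * ((w - 1) * a_n n w)
        - 2 * real n * (w - 1) * ((w - 1)\<^sup>2 * b_n n w) + (w - 1) ^ 3 * c_n n w"
    by (simp add: algebra_simps power2_eq_square power3_eq_cube)
  also have "\<dots> = X * (w + 1) - Q"
    unfolding a_n_closed_form b_n_closed_form c_n_closed_form X_def Q_def
    by (simp add: algebra_simps power2_eq_square power3_eq_cube)
  finally have D_eq: "(w - 1) ^ 3 * ((real n)\<^sup>2 * a_n n w - 2 * real n * b_n n w + c_n n w)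
                    = X * (w + 1) - Q" .
  have "Q = (real n)\<^sup>2 * (w - 1)\<^sup>2 + (2 * real n + 1) * w * (w - 1) + 2 * w"
    unfolding Q_def by (simp add: algebra_simps power2_eq_square)
  with w have "(w - 1) * Q \<ge> 0" by simp
  moreover have "X \<ge> w\<^sup>2"
    unfolding X_def using w n by (intro power_increasing) auto
  moreover have "(w - 1) * (X * (w + 1) - Q) = X * w\<^sup>2 - X - (w - 1) * Q"
    by (simp add: algebra_simps power2_eq_square)
  moreover have "(w - 1) * (w\<^sup>2 * a_n n w) = X * w\<^sup>2 - w\<^sup>2"
  proof -
    have "(w - 1) * (w\<^sup>2 * a_n n w) = w\<^sup>2 * ((w - 1) * a_n n w)"
      by (simp only: ac_simps)
    also have "\<dots> = w\<^sup>2 * (X - 1)"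
      by (simp only: a_n_closed_form X_def)
    finally show ?thesis
      by (simp add: algebra_simps)
  qed
  ultimately have "(w - 1) * (X * (w + 1) - Q) \<le> (w - 1) * (w\<^sup>2 * a_n n w)"
    by linarith
  with w D_eq show ?thesis by simp
qed

lemma F_n_eq_sqrt:
  assumes "w > 0"
  shows "F_n n w = sqrt (c_n n w * (a_n n w * c_n n w - (b_n n w)\<^sup>2) / (4 * w\<^sup>2 * (a_n n w) ^ 3))"
proof -
  have "1 / (2 * sqrt w) = sqrt (1 / (4 * w))"
    using assms by (simp add: real_sqrt_divide real_sqrt_mult)
  then show ?thesis
    using assms a_n_pos[of w n]
    unfolding F_n_def
    by (simp only: real_sqrt_mult[symmetric])
       (simp add: field_simps power2_eq_square power3_eq_cube)
qed

lemma F_n_nonneg: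
  assumes "w \<ge> 0"
  shows "F_n n w \<ge> 0"
proof -
  have "c_n n w \<ge> 0"
    unfolding c_n_def using assms by (intro sum_nonneg) auto
  then show ?thesis
    using assms a_n_pos[OF assms, of n] b_n_sq_le_a_n_mult_c_n[OF assms, of n]
    unfolding F_n_def by (intro mult_nonneg_nonneg) auto
qed

lemma F_n_le_powr:
  fixes w :: real
  assumes w: "w > 1" and n: "n \<ge> 1"
  shows "F_n n w \<le> real n / 2 * (w - 1) powr (-3/2)"
proof -
  define A where "A = a_n n w"
  define B where "B = b_n n w"
  define C where "C = c_n n w"
  define D where "D = (real n)\<^sup>2 * A - 2 * real n * B + C"
  have A_pos: "A > 0" and C_le: "C \<le> (real n)\<^sup>2 * A" and var_nonneg: "A * C - B\<^sup>2 \<ge> 0"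
    using w a_n_pos c_n_le_a_n b_n_sq_le_a_n_mult_c_n unfolding A_def B_def C_def by auto
  have var_le: "A * C - B\<^sup>2 \<le> A * D"
  proof -
    have "A * D - (A * C - B\<^sup>2) = (real n * A - B)\<^sup>2"
      unfolding D_def by (simp add: algebra_simps power2_eq_square)
    then show ?thesis by (smt (verit) zero_le_power2)
  qed
  have D_bound: "(w - 1) ^ 3 * D \<le> w\<^sup>2 * A"
    using moment_about_n_bound[OF w n] unfolding D_def A_def B_def C_def .
  have "C * (A * C - B\<^sup>2) / (4 * w\<^sup>2 * A ^ 3) \<le> ((real n)\<^sup>2 * A) * (A * D) / (4 * w\<^sup>2 * A ^ 3)"
    using A_pos w C_le var_le var_nonneg by (intro divide_right_mono mult_mono) auto
  also have "\<dots> = (real n)\<^sup>2 * D / (4 * w\<^sup>2 * A)"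
    using A_pos by (simp add: field_simps power2_eq_square power3_eq_cube)
  also have "\<dots> \<le> (real n)\<^sup>2 / (4 * (w - 1) ^ 3)"
  proof -
    have "(real n)\<^sup>2 * ((w - 1) ^ 3 * D) \<le> (real n)\<^sup>2 * (w\<^sup>2 * A)"
      using D_bound by (intro mult_left_mono) auto
    then show ?thesis
      using A_pos w by (simp add: divide_simps mult_ac)
  qed
  also have "\<dots> = (real n / 2 * (w - 1) powr (-3/2))\<^sup>2"
  proof -
    have "((w - 1) powr (-3/2))\<^sup>2 = (w - 1) powr (-3)"
      by (simp add: power2_eq_square flip: powr_add)
    also have "\<dots> = 1 / (w - 1) ^ 3"
      using w by (simp add: powr_minus_divide)
    finally have "((w - 1) powr (-3/2))\<^sup>2 = 1 / (w - 1) ^ 3" .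
    then show ?thesis
      unfolding power_mult_distrib power_divide by simp
  qed
  finally have "sqrt (C * (A * C - B\<^sup>2) / (4 * w\<^sup>2 * A ^ 3))
                  \<le> sqrt ((real n / 2 * (w - 1) powr (-3/2))\<^sup>2)"
    by (rule real_sqrt_le_mono)
  then show ?thesis
    using w F_n_eq_sqrt[of w n] unfolding A_def B_def C_def by simp
qed

lemma has_integral_shifted_powr_to_inf:
  fixes a c e :: real
  assumes "e < -1" "a > c"
  shows "((\<lambda>x. (x - c) powr e) has_integral -((a - c) powr (e + 1)) / (e + 1)) {a..}"
proof (intro has_integral_to_inf integrable_continuous_interval continuous_intros)
  define F where "F \<equiv> \<lambda>x. (x - c) powr (e + 1) / (e + 1)"
  have "((\<lambda>x. (x - c) powr e) has_integral (F y - F a)) {a..y}" if "y \<ge> a" for y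
    unfolding F_def using assms
    by (intro fundamental_theorem_of_calculus that)
       (auto intro!: derivative_eq_intros
               simp flip: has_real_derivative_iff_has_vector_derivative)
  then have "\<forall>\<^sub>F y in at_top. integral {a..y} (\<lambda>x. (x - c) powr e) = F y - F a"
    by (meson eventually_at_top_linorderI integral_unique)
  moreover have "((\<lambda>y. F y - F a) \<longlongrightarrow> - F a) at_top"
    using assms unfolding F_def by real_asymp
  ultimately show "((\<lambda>y. integral {a..y} (\<lambda>x. (x - c) powr e))
                     \<longlongrightarrow> -((a - c) powr (e + 1)) / (e + 1)) at_top"
    by (simp add: F_def filterlim_cong)
qed (use assms in auto)

lemma set_integral_le_of_has_integral_majorant:
  fixes f g :: "'a::euclidean_space \<Rightarrow> real"
  assumes g: "(g has_integral I) S"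
    and f_meas: "set_borel_measurable lborel S f"
    and bounds: "\<And>x. x \<in> S \<Longrightarrow> 0 \<le> f x \<and> f x \<le> g x"
  shows "set_integrable lborel S f \<and> (LINT x:S|lborel. f x) \<le> I"
proof -
  have g_int: "g integrable_on S"
    using g by blast
  then have "g absolutely_integrable_on S"
    using bounds by (intro nonnegative_absolutely_integrable_1) (auto intro: order_trans)
  moreover have "set_borel_measurable lebesgue S f"
    using f_meas unfolding set_borel_measurable_def by (rule measurable_completion)
  ultimately have "set_integrable lebesgue S f"
    by (rule set_integrable_bound) (use bounds in \<open>force intro!: AE_I2\<close>)
  with f_meas have f_int: "set_integrable lborel S f"
    unfolding set_integrable_def set_borel_measurable_def by (simp add: integrable_completion)
  have "(LINT x:S|lborel. f x) = integral S f"
    by (rule set_borel_integral_eq_integral(2)[OF f_int])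
  also have "\<dots> \<le> integral S g"
    using set_borel_integral_eq_integral(1)[OF f_int] g_int bounds by (intro integral_le) auto
  also have "\<dots> = I"
    using g by (rule integral_unique)
  finally show ?thesis
    using f_int by simp
qed

theorem lemma3p4:
  fixes n :: nat
  assumes "n \<ge> 1"
  shows "set_integrable lborel {2..} (F_n n)
         \<and> (LINT w:{2..}|lborel. F_n n w) \<le> real n"
proof (rule set_integral_le_of_has_integral_majorant)
  show "((\<lambda>w. real n / 2 * (w - 1) powr (-3/2)) has_integral real n) {2..}"
    using has_integral_mult_right[OF has_integral_shifted_powr_to_inf[of "-3/2" 1 2], of "real n / 2"]
    by simp
  show "set_borel_measurable lborel {2..} (F_n n)"
    unfolding set_borel_measurable_def F_n_def a_n_def b_n_def c_n_def by measurable
  show "0 \<le> F_n n w \<and> F_n n w \<le> real n / 2 * (w - 1) powr (-3/2)" if "w \<in> {2..}" for w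
    using that F_n_nonneg[of w n] F_n_le_powr[OF _ assms, of w] by simp
qed

end
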